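(* With the notation of the context, let $f(g)$ be the number of $k$-tuples of nonnegative integers $[g_1,\dots,g_k]$ with $\sum_i g_i=g$ and $g_i\le\alpha_i g$ for all $i$. Then, as formal power series, \[ F(x)=\sum_{g=0}^\infty f(g)x^g=\frac{\sum_{\mathbf{a}\in\mathcal{A}}x^{b(\mathbf{a})}}{\prod_{i=1}^k\left(1-x^{N/n_i}\right)}. \]
   Context: Let $k\ge 2$ and let $\alpha_1,\dots,\alpha_k$ be nonnegative rational numbers such that the sum of any $k-1$ of them is at most $1$ and $\sum_i\alpha_i>1$. Write $\alpha_i=m_i/n_i$ in lowest terms with $n_i\ge 1$. Set $N=\prod_{i=1}^k n_i$, $A=N(\sum_{i=1}^k\alpha_i-1)$ (a positive integer), and $\hat\alpha_i=1-\sum_{j\ne i}\alpha_j$. Let $\mathcal{A}$ be the set of integer $k$-tuples $\mathbf{a}=(a_1,\dots,a_k)$ with $0\le a_i<A$ for all $i$ such that for every $1\le j\le k$ the integer $N\hat\alpha_j\frac{a_j}{n_j}+N\alpha_j\sum_{i\ne j}\frac{a_i}{n_i}$ is divisible by $A$. For $\mathbf{a}\in\mathcal{A}$ put $b(\mathbf{a})=\frac{N}{A}\sum_{i=1}^k\frac{a_i}{n_i}$ (a nonnegative integer). *)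

theory Defs
  imports Complex_Main "HOL-Library.FuncSet" "HOL-Computational_Algebra.Formal_Power_Series"
begin

text \<open>Tuples (alpha_1,...,alpha_k) are indexed by {..<k}. n_i is the denominator in lowest terms.\<close>

definition den :: "rat \<Rightarrow> int" where
  "den q = snd (quotient_of q)"

definition bigN :: "nat \<Rightarrow> (nat \<Rightarrow> rat) \<Rightarrow> int" where
  "bigN k \<alpha> = (\<Prod>i<k. den (\<alpha> i))"

definition bigA :: "nat \<Rightarrow> (nat \<Rightarrow> rat) \<Rightarrow> int" where
  "bigA k \<alpha> = \<lfloor>of_int (bigN k \<alpha>) * ((\<Sum>i<k. \<alpha> i) - 1)\<rfloor>"

definition alpha_hat :: "nat \<Rightarrow> (nat \<Rightarrow> rat) \<Rightarrow> nat \<Rightarrow> rat" where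
  "alpha_hat k \<alpha> j = 1 - (\<Sum>i\<in>{..<k} - {j}. \<alpha> i)"

definition setA :: "nat \<Rightarrow> (nat \<Rightarrow> rat) \<Rightarrow> (nat \<Rightarrow> int) set" where
  "setA k \<alpha> = {a \<in> Pi\<^sub>E {..<k} (\<lambda>_. {0..<bigA k \<alpha>}).
     \<forall>j<k. \<exists>z::int.
       of_int (bigN k \<alpha>) * alpha_hat k \<alpha> j * (of_int (a j) / of_int (den (\<alpha> j)))
       + of_int (bigN k \<alpha>) * \<alpha> j * (\<Sum>i\<in>{..<k} - {j}. of_int (a i) / of_int (den (\<alpha> i)))
       = of_int (bigA k \<alpha> * z)}"

definition bval :: "nat \<Rightarrow> (nat \<Rightarrow> rat) \<Rightarrow> (nat \<Rightarrow> int) \<Rightarrow> rat" where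
  "bval k \<alpha> a = of_int (bigN k \<alpha>) / of_int (bigA k \<alpha>) * (\<Sum>i<k. of_int (a i) / of_int (den (\<alpha> i)))"

definition fcount :: "nat \<Rightarrow> (nat \<Rightarrow> rat) \<Rightarrow> nat \<Rightarrow> nat" where
  "fcount k \<alpha> g = card {gs \<in> Pi\<^sub>E {..<k} (\<lambda>_. {0..g}).
      (\<Sum>i<k. gs i) = g \<and> (\<forall>i<k. of_nat (gs i) \<le> \<alpha> i * of_nat g)}"

end

theory Submission
  imports Defs
begin

(* A composition y of g counted by f(g) is encoded by its slack vector t_i = n_i * (alpha_i * g - y_i),
   a nonnegative integer point. The points arising this way, for all g together, are exactly the
   nonnegative points t whose "coordinates" y_j = alpha_j * g - t_j / n_j are integers, where g is
   recovered linearly from t as g = (N/A) * sum_i t_i / n_i. This set is invariant under translation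
   by A * Z^k, so each such point is uniquely a + A * c with a in the box [0, A)^k -- that is,
   a in the set \<A> -- and c a nonnegative integer vector; then g = b(a) + sum_i c_i * N / n_i.
   Counting the pairs (a, c) gives F(x) = (sum_{a in \<A>} x^b(a)) * prod_i 1/(1 - x^(N/n_i)). *)

unbundle fps_syntax

definition geometric_fps :: "nat \<Rightarrow> 'a :: comm_ring_1 fps" where
  "geometric_fps w = Abs_fps (\<lambda>n. if w dvd n then 1 else 0)"

lemma geometric_fps_inverse:
  assumes "w > 0"
  shows "(1 - fps_X ^ w) * (geometric_fps w :: 'a :: comm_ring_1 fps) = 1"
proof (rule fps_ext)
  fix n
  have shifted: "w dvd n - w \<longleftrightarrow> w dvd n" if "w \<le> n"
    using that by (metis dvd_add_triv_right_iff le_add_diff_inverse2)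
  have "((1 - fps_X ^ w) * geometric_fps w) $ n
      = geometric_fps w $ n - (fps_X ^ w * geometric_fps w) $ n"
    by (simp add: algebra_simps)
  also have "\<dots> = (if n = 0 then 1 else 0)"
    unfolding fps_X_power_mult_nth geometric_fps_def using assms
    by (auto simp: dvd_imp_le shifted)
  finally show "((1 - fps_X ^ w) * geometric_fps w) $ n = (1 :: 'a fps) $ n"
    by simp
qed

(* The solutions c of sum_{i in I} c_i * w_i = n in nonnegative integers; the bound c_i <= n
   (automatic when all w_i > 0) only serves to make the carrier a finite Pi-set. *)
definition weighted_solutions :: "'i set \<Rightarrow> ('i \<Rightarrow> nat) \<Rightarrow> nat \<Rightarrow> ('i \<Rightarrow> nat) set" where
  "weighted_solutions I w n = {c \<in> Pi\<^sub>E I (\<lambda>_. {..n}). (\<Sum>i\<in>I. c i * w i) = n}"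

lemma finite_weighted_solutions: "finite I \<Longrightarrow> finite (weighted_solutions I w n)"
  unfolding weighted_solutions_def
  by (rule finite_subset[of _ "Pi\<^sub>E I (\<lambda>_. {..n})"]) (auto intro: finite_PiE)

(* Splitting off the summand c_x * w_x = j: a solution for insert x I is a multiple j of w_x
   together with a solution for I of the remaining value n - j. *)
lemma weighted_solutions_insert:
  assumes I: "finite I" "x \<notin> I" and w: "\<forall>i\<in>insert x I. w i > 0"
  shows "bij_betw (\<lambda>(j, c). c(x := j div w x))
           (SIGMA j:{j \<in> {0..n}. w x dvd j}. weighted_solutions I w (n - j))
           (weighted_solutions (insert x I) w n)"
proof (rule bij_betw_byWitness[where f' = "\<lambda>c. (c x * w x, c(x := undefined))"])
  let ?S = "SIGMA j:{j \<in> {0..n}. w x dvd j}. weighted_solutions I w (n - j)"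
  have sum_upd: "(\<Sum>i\<in>I. (c(x := q)) i * w i) = (\<Sum>i\<in>I. c i * w i)" for c :: "'a \<Rightarrow> nat" and q
    using I by (intro sum.cong) auto
  show "\<forall>p\<in>?S. (\<lambda>c. (c x * w x, c(x := undefined))) ((\<lambda>(j, c). c(x := j div w x)) p) = p"
  proof
    fix p assume "p \<in> ?S"
    then obtain j c where p: "p = (j, c)" "w x dvd j" "c \<in> weighted_solutions I w (n - j)"
      by blast
    have "c x = undefined"
      using p(3) I unfolding weighted_solutions_def by (auto simp: PiE_iff extensional_def)
    then show "(\<lambda>c. (c x * w x, c(x := undefined))) ((\<lambda>(j, c). c(x := j div w x)) p) = p"
      using p by auto
  qed
  show "\<forall>c\<in>weighted_solutions (insert x I) w n.
      (\<lambda>(j, c). c(x := j div w x)) ((\<lambda>c. (c x * w x, c(x := undefined))) c) = c"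
    using w by auto
  show "(\<lambda>(j, c). c(x := j div w x)) ` ?S \<subseteq> weighted_solutions (insert x I) w n"
  proof clarify
    fix j c assume j: "j \<in> {0..n}" "w x dvd j" and c: "c \<in> weighted_solutions I w (n - j)"
    have "j div w x \<le> n" using j by (meson atLeastAtMost_iff div_le_dividend le_trans)
    then show "c(x := j div w x) \<in> weighted_solutions (insert x I) w n"
      using c j I sum_upd[of c] unfolding weighted_solutions_def
      by (auto simp: PiE_iff extensional_def)
  qed
  show "(\<lambda>c. (c x * w x, c(x := undefined))) ` weighted_solutions (insert x I) w n \<subseteq> ?S"
  proof (rule image_subsetI)
    fix c assume c: "c \<in> weighted_solutions (insert x I) w n"
    have total: "c x * w x + (\<Sum>i\<in>I. c i * w i) = n"
      using c I unfolding weighted_solutions_def by simp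
    have bound: "c i \<le> (\<Sum>i\<in>I. c i * w i)" if "i \<in> I" for i
    proof -
      have "c i \<le> c i * w i" using w that by (simp add: Suc_le_eq)
      also have "\<dots> \<le> (\<Sum>i\<in>I. c i * w i)" using I that by (intro member_le_sum) auto
      finally show ?thesis .
    qed
    have "c(x := undefined) \<in> weighted_solutions I w (n - c x * w x)"
      using c total bound I sum_upd[of c] unfolding weighted_solutions_def
      by (auto simp: PiE_iff extensional_def)
    then show "(c x * w x, c(x := undefined)) \<in> ?S" using total by auto
  qed
qed

lemma prod_geometric_fps_nth:
  assumes "finite I" "\<forall>i\<in>I. w i > 0"
  shows "(\<Prod>i\<in>I. geometric_fps (w i)) $ n = (of_nat (card (weighted_solutions I w n)) :: 'a :: comm_ring_1)"
  using assms
proof (induction I arbitrary: n rule: finite_induct)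
  case empty
  have "weighted_solutions {} w n = (if n = 0 then {\<lambda>_. undefined} else {})"
    unfolding weighted_solutions_def by auto
  then show ?case by simp
next
  case (insert x I)
  define J where "J = {j \<in> {0..n}. w x dvd j}"
  have "(\<Prod>i\<in>insert x I. geometric_fps (w i)) $ n
      = (geometric_fps (w x) * (\<Prod>i\<in>I. geometric_fps (w i)) :: 'a fps) $ n"
    using insert.hyps by simp
  also have "\<dots> = (\<Sum>j=0..n. if w x dvd j then of_nat (card (weighted_solutions I w (n - j))) else 0)"
    unfolding fps_mult_nth using insert.IH insert.prems
    by (intro sum.cong) (auto simp: geometric_fps_def)
  also have "\<dots> = (\<Sum>j\<in>J. of_nat (card (weighted_solutions I w (n - j))))"
    unfolding J_def by (rule sum.inter_filter[symmetric]) simp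
  also have "\<dots> = of_nat (card (SIGMA j:J. weighted_solutions I w (n - j)))"
    using insert.hyps by (subst card_SigmaI) (auto simp: J_def finite_weighted_solutions)
  also have "card (SIGMA j:J. weighted_solutions I w (n - j)) = card (weighted_solutions (insert x I) w n)"
    unfolding J_def using weighted_solutions_insert[OF insert.hyps insert.prems]
    by (rule bij_betw_same_card)
  finally show ?case .
qed

lemma of_nat_nat_floor: "x \<in> \<int> \<Longrightarrow> x \<ge> 0 \<Longrightarrow> of_nat (nat \<lfloor>x\<rfloor>) = (x :: 'a :: floor_ceiling)"
  by (elim Ints_cases) simp

locale weight_cone =
  fixes k :: nat and \<alpha> :: "nat \<Rightarrow> rat"
  assumes alpha_nonneg: "\<forall>i<k. \<alpha> i \<ge> 0"
    and partial_sums_le: "\<forall>j<k. (\<Sum>i\<in>{..<k} - {j}. \<alpha> i) \<le> 1"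
    and total_gt: "(\<Sum>i<k. \<alpha> i) > 1"
begin

definition n :: "nat \<Rightarrow> int" where "n i = den (\<alpha> i)"
definition m :: "nat \<Rightarrow> int" where "m i = fst (quotient_of (\<alpha> i))"
abbreviation N :: int where "N \<equiv> bigN k \<alpha>"
abbreviation A :: int where "A \<equiv> bigA k \<alpha>"
definition d :: "nat \<Rightarrow> int" where "d i = N div n i"

lemma n_pos: "n i > 0"
  unfolding n_def den_def by (metis prod.collapse quotient_of_denom_pos)

lemma m_eq: "of_int (m i) = \<alpha> i * of_int (n i)"
proof -
  have "\<alpha> i = of_int (m i) / of_int (n i)"
    unfolding n_def den_def m_def by (metis prod.collapse quotient_of_div)
  then show ?thesis using n_pos[of i] by simp
qed

lemma d_eq: "i < k \<Longrightarrow> d i = (\<Prod>l\<in>{..<k} - {i}. n l)"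
  and N_eq: "i < k \<Longrightarrow> N = n i * d i"
proof -
  assume i: "i < k"
  have N: "N = n i * (\<Prod>l\<in>{..<k} - {i}. n l)"
    unfolding bigN_def n_def using i by (simp add: prod.remove)
  then show d: "d i = (\<Prod>l\<in>{..<k} - {i}. n l)"
    unfolding d_def using n_pos[of i] by simp
  show "N = n i * d i" unfolding N d ..
qed

lemma N_pos: "N > 0"
  unfolding bigN_def using n_pos n_def by (simp add: prod_pos)

lemma d_pos: "i < k \<Longrightarrow> d i > 0"
  using d_eq n_pos by (simp add: prod_pos)

(* For i \<noteq> j the denominator n_j divides d_i, so alpha_j * d_i is an integer. *)
lemma alpha_d_Ints:
  assumes "i < k" "j < k" "i \<noteq> j"
  shows "\<alpha> j * of_int (d i) \<in> \<int>"
proof -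
  have "n j dvd d i" using assms d_eq by (simp add: dvd_prodI)
  then obtain q where q: "d i = n j * q" by blast
  have "\<alpha> j * of_int (d i) = of_int (m j * q)"
    unfolding q using m_eq[of j] by (simp add: algebra_simps)
  then show ?thesis by simp
qed

lemma A_eq: "of_int A = of_int N * ((\<Sum>i<k. \<alpha> i) - 1)"
proof -
  have "of_int N * (\<Sum>i<k. \<alpha> i) = (\<Sum>i<k. of_int (m i * d i) :: rat)"
    unfolding sum_distrib_left using N_eq m_eq by (intro sum.cong) (auto simp: algebra_simps)
  then have eq: "of_int N * ((\<Sum>i<k. \<alpha> i) - 1) = (of_int ((\<Sum>i<k. m i * d i) - N) :: rat)"
    by (simp add: algebra_simps)
  have "A = (\<Sum>i<k. m i * d i) - N" unfolding bigA_def eq by (rule floor_of_int)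
  then show ?thesis using eq by simp
qed

lemma A_pos: "A > 0"
proof -
  have "(of_int A :: rat) > 0" using A_eq N_pos total_gt by simp
  then show ?thesis by simp
qed

(* A point t in Z^k is the vector of slacks t_i = n_i * (alpha_i * g - y_i) of a composition y of g.
   The height recovers g = (N/A) * sum_i t_i / n_i, and coord recovers y_j = alpha_j * g - t_j / n_j. *)
definition height :: "(nat \<Rightarrow> int) \<Rightarrow> rat" where
  "height t = (\<Sum>i<k. of_int (t i) * of_int (d i)) / of_int A"

definition coord :: "(nat \<Rightarrow> int) \<Rightarrow> nat \<Rightarrow> rat" where
  "coord t j = \<alpha> j * height t - of_int (t j) / of_int (n j)"

lemma height_cong: "(\<And>i. i < k \<Longrightarrow> t i = t' i) \<Longrightarrow> height t = height t'"
  unfolding height_def by (metis (no_types, lifting) lessThan_iff sum.cong)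

lemma coord_cong: "(\<And>i. i < k \<Longrightarrow> t i = t' i) \<Longrightarrow> j < k \<Longrightarrow> coord t j = coord t' j"
  unfolding coord_def using height_cong by metis

lemma A_height_sum: "of_int A * height t = (\<Sum>i<k. of_int (t i) * of_int (d i))"
  unfolding height_def using A_pos by simp

lemma A_height: "of_int A * height t = of_int N * (\<Sum>i<k. of_int (t i) / of_int (n i))"
proof -
  have "of_int (t i) * of_int (d i) = of_int N * (of_int (t i) / of_int (n i) :: rat)" if "i < k" for i
    using N_eq[OF that] n_pos[of i] by simp
  then show ?thesis unfolding A_height_sum sum_distrib_left by (intro sum.cong) auto
qed

(* A times the j-th coordinate is the j-th linear form of the divisibility conditions
   defining the set \<A>. *)
lemma A_coord:
  assumes j: "j < k"
  shows "of_int A * coord t j = of_int N * alpha_hat k \<alpha> j * (of_int (t j) / of_int (n j))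
      + of_int N * \<alpha> j * (\<Sum>i\<in>{..<k} - {j}. of_int (t i) / of_int (n i))"
proof -
  have split: "(\<Sum>i<k. f i) = f j + (\<Sum>i\<in>{..<k} - {j}. f i)" for f :: "nat \<Rightarrow> rat"
    using j by (simp add: sum.remove)
  have A: "of_int A = of_int N * (\<alpha> j - alpha_hat k \<alpha> j)"
    unfolding A_eq alpha_hat_def split[of \<alpha>] by simp
  have "of_int A * coord t j = \<alpha> j * (of_int A * height t) - of_int A * (of_int (t j) / of_int (n j))"
    unfolding coord_def by (simp add: algebra_simps)
  also have "\<dots> = \<alpha> j * (of_int N * (of_int (t j) / of_int (n j)
        + (\<Sum>i\<in>{..<k} - {j}. of_int (t i) / of_int (n i))))
      - of_int N * (\<alpha> j - alpha_hat k \<alpha> j) * (of_int (t j) / of_int (n j))"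
    unfolding A_height split[of "\<lambda>i. of_int (t i) / of_int (n i)"] by (subst A) simp
  finally show ?thesis by (simp add: algebra_simps)
qed

lemma setA_iff:
  "a \<in> setA k \<alpha> \<longleftrightarrow> a \<in> Pi\<^sub>E {..<k} (\<lambda>_. {0..<A}) \<and> (\<forall>j<k. coord a j \<in> \<int>)"
proof -
  have "(of_int N * alpha_hat k \<alpha> j * (of_int (a j) / of_int (den (\<alpha> j)))
       + of_int N * \<alpha> j * (\<Sum>i\<in>{..<k} - {j}. of_int (a i) / of_int (den (\<alpha> i)))
       = of_int (A * z)) \<longleftrightarrow> coord a j = of_int z" if "j < k" for j z
  proof -
    have "of_int N * alpha_hat k \<alpha> j * (of_int (a j) / of_int (den (\<alpha> j)))
       + of_int N * \<alpha> j * (\<Sum>i\<in>{..<k} - {j}. of_int (a i) / of_int (den (\<alpha> i)))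
       = of_int A * coord a j"
      using A_coord[OF that, of a] unfolding n_def by simp
    then show ?thesis using A_pos by simp
  qed
  then show ?thesis unfolding setA_def Ints_def by auto
qed

lemma bval_eq_height: "bval k \<alpha> a = height a"
proof -
  have "of_int A * bval k \<alpha> a = of_int A * height a"
    unfolding A_height bval_def n_def using A_pos by simp
  then show ?thesis using A_pos by simp
qed

(* The coordinates add up to the height, since sum_j y_j = g. *)
lemma sum_coord: "(\<Sum>j<k. coord t j) = height t"
proof -
  have "of_int N * (((\<Sum>i<k. \<alpha> i) - 1) * height t) = of_int N * (\<Sum>i<k. of_int (t i) / of_int (n i))"
    using A_height[of t] unfolding A_eq by (simp only: mult.assoc)
  then have "(\<Sum>i<k. of_int (t i) / of_int (n i)) = ((\<Sum>i<k. \<alpha> i) - 1) * height t"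
    using N_pos by simp
  moreover have "(\<Sum>j<k. coord t j) = (\<Sum>i<k. \<alpha> i) * height t - (\<Sum>i<k. of_int (t i) / of_int (n i))"
    unfolding coord_def by (simp add: sum_subtractf sum_distrib_right)
  ultimately show ?thesis by (simp add: algebra_simps)
qed

lemma height_Ints: "(\<And>j. j < k \<Longrightarrow> coord t j \<in> \<int>) \<Longrightarrow> height t \<in> \<int>"
  unfolding sum_coord[symmetric] by (rule Ints_sum) simp

(* Nonnegative points have nonnegative height and coordinates; the latter uses alpha_hat_j >= 0. *)
lemma height_nonneg: "(\<And>i. i < k \<Longrightarrow> t i \<ge> 0) \<Longrightarrow> height t \<ge> 0"
  unfolding height_def using A_pos d_pos
  by (intro divide_nonneg_pos sum_nonneg) (auto simp: less_imp_le)

lemma coord_nonneg: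
  assumes j: "j < k" and t: "\<And>i. i < k \<Longrightarrow> t i \<ge> 0"
  shows "coord t j \<ge> 0"
proof -
  have "alpha_hat k \<alpha> j \<ge> 0" unfolding alpha_hat_def using partial_sums_le j by simp
  moreover have "(\<Sum>i\<in>{..<k} - {j}. of_int (t i) / of_int (n i)) \<ge> (0 :: rat)"
    using t n_pos by (intro sum_nonneg divide_nonneg_pos) auto
  moreover have "of_int (t j) / of_int (n j) \<ge> (0 :: rat)" using t[OF j] n_pos[of j] by simp
  ultimately have "of_int A * coord t j \<ge> 0" unfolding A_coord[OF j]
    using N_pos alpha_nonneg j by (intro add_nonneg_nonneg mult_nonneg_nonneg) auto
  then show ?thesis using A_pos by (simp add: zero_le_mult_iff)
qed

lemma height_shift: "height (\<lambda>i. t i + A * c i) = height t + of_int (\<Sum>i<k. c i * d i)"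
proof -
  have "of_int A * height (\<lambda>i. t i + A * c i) = of_int A * (height t + of_int (\<Sum>i<k. c i * d i))"
    unfolding distrib_left A_height_sum by (simp add: algebra_simps sum.distrib sum_distrib_left)
  then show ?thesis using A_pos by simp
qed

lemma coord_shift_Ints:
  assumes j: "j < k"
  shows "coord (\<lambda>i. t i + A * c i) j \<in> \<int> \<longleftrightarrow> coord t j \<in> \<int>"
proof -
  define S where "S = (\<Sum>i\<in>{..<k} - {j}. \<alpha> i)"
  have split: "(\<Sum>i<k. f i) = f j + (\<Sum>i\<in>{..<k} - {j}. f i)" for f :: "nat \<Rightarrow> rat"
    using j by (simp add: sum.remove)
  have A_n: "of_int A / of_int (n j) = of_int (d j) * (\<alpha> j + S - 1)"
    using A_eq N_eq[OF j] n_pos[of j] unfolding split[of \<alpha>] S_def by simp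
  have "coord (\<lambda>i. t i + A * c i) j - coord t j
      = \<alpha> j * (\<Sum>i<k. of_int (c i) * of_int (d i)) - of_int (c j) * (of_int A / of_int (n j))"
    unfolding coord_def height_shift by (simp add: algebra_simps add_divide_distrib)
  also have "\<dots> = (\<Sum>i\<in>{..<k} - {j}. of_int (c i) * (\<alpha> j * of_int (d i)))
      - of_int (c j) * (\<Sum>i\<in>{..<k} - {j}. \<alpha> i * of_int (d j)) + of_int (c j * d j)"
    unfolding A_n split[of "\<lambda>i. of_int (c i) * of_int (d i)"] S_def
    by (simp add: algebra_simps sum_distrib_left sum_distrib_right)
  also have "\<dots> \<in> \<int>"
    using j alpha_d_Ints by (intro Ints_add Ints_diff Ints_sum Ints_mult[OF Ints_of_int] Ints_of_int) auto
  finally have diff: "coord (\<lambda>i. t i + A * c i) j - coord t j \<in> \<int>" .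
  show ?thesis
  proof
    assume "coord (\<lambda>i. t i + A * c i) j \<in> \<int>"
    from Ints_diff[OF this diff] show "coord t j \<in> \<int>" by simp
  next
    assume "coord t j \<in> \<int>"
    from Ints_add[OF this diff] show "coord (\<lambda>i. t i + A * c i) j \<in> \<int>" by simp
  qed
qed

definition compositions :: "nat \<Rightarrow> (nat \<Rightarrow> nat) set" where
  "compositions g = {y \<in> Pi\<^sub>E {..<k} (\<lambda>_. {0..g}).
      (\<Sum>i<k. y i) = g \<and> (\<forall>i<k. of_nat (y i) \<le> \<alpha> i * of_nat g)}"

definition cone_points :: "nat \<Rightarrow> (nat \<Rightarrow> int) set" where
  "cone_points g = {t \<in> Pi\<^sub>E {..<k} (\<lambda>_. {0..}). (\<forall>j<k. coord t j \<in> \<int>) \<and> height t = of_nat g}"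

definition slack :: "nat \<Rightarrow> (nat \<Rightarrow> nat) \<Rightarrow> nat \<Rightarrow> int" where
  "slack g y = restrict (\<lambda>i. m i * int g - n i * int (y i)) {..<k}"

definition unslack :: "(nat \<Rightarrow> int) \<Rightarrow> nat \<Rightarrow> nat" where
  "unslack t = restrict (\<lambda>j. nat \<lfloor>coord t j\<rfloor>) {..<k}"

lemma slack_rat: "i < k \<Longrightarrow> of_int (slack g y i) = of_int (n i) * (\<alpha> i * of_nat g - of_nat (y i))"
  unfolding slack_def by (simp add: m_eq algebra_simps)

lemma height_slack:
  assumes "(\<Sum>i<k. y i) = g"
  shows "height (slack g y) = of_nat g"
proof -
  have "of_int (slack g y i) / of_int (n i) = \<alpha> i * of_nat g - of_nat (y i)" if "i < k" for i
    using n_pos[of i] slack_rat[OF that] by simp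
  then have "(\<Sum>i<k. of_int (slack g y i) / of_int (n i)) = (\<Sum>i<k. \<alpha> i * of_nat g - of_nat (y i))"
    by (intro sum.cong) auto
  also have "\<dots> = ((\<Sum>i<k. \<alpha> i) - 1) * of_nat g"
    using assms by (simp add: sum_subtractf sum_distrib_right sum_distrib_left algebra_simps flip: of_nat_sum)
  finally have "of_int A * height (slack g y) = of_int A * of_nat g"
    by (simp only: A_height) (simp add: A_eq)
  then show ?thesis using A_pos by simp
qed

lemma coord_slack: "height (slack g y) = of_nat g \<Longrightarrow> j < k \<Longrightarrow> coord (slack g y) j = of_nat (y j)"
  unfolding coord_def using n_pos[of j] by (simp add: slack_rat)

lemma slack_coord:
  assumes "height t = of_nat g" "coord t j = of_nat y"
  shows "t j = m j * int g - n j * int y"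
proof -
  have "(of_int (m j * int g - n j * int y) :: rat) = of_int (t j)"
    using assms n_pos[of j] unfolding coord_def by (simp add: m_eq field_simps)
  then show ?thesis by linarith
qed

(* First bijection: compositions of g correspond to cone points of height g; the bounds
   y_i <= alpha_i * g are exactly the nonnegativity of the slacks. *)
lemma slack_in_cone_points:
  assumes y: "y \<in> compositions g"
  shows "slack g y \<in> cone_points g \<and> unslack (slack g y) = y"
proof -
  have yPi: "y \<in> Pi\<^sub>E {..<k} (\<lambda>_. {0..g})" and ys: "(\<Sum>i<k. y i) = g"
    and yle: "\<And>i. i < k \<Longrightarrow> of_nat (y i) \<le> \<alpha> i * of_nat g"
    using y unfolding compositions_def by auto
  have nonneg: "slack g y i \<ge> 0" if "i < k" for i
  proof -
    have "(of_int (slack g y i) :: rat) \<ge> 0"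
      unfolding slack_rat[OF that] using yle[OF that] n_pos[of i] by simp
    then show ?thesis by simp
  qed
  have height: "height (slack g y) = of_nat g" using height_slack[OF ys] .
  have coord: "coord (slack g y) j = of_nat (y j)" if "j < k" for j
    using coord_slack[OF height that] .
  have "slack g y \<in> cone_points g"
    unfolding cone_points_def using nonneg height coord by (auto simp: slack_def)
  moreover have "unslack (slack g y) = y"
    using yPi coord by (auto simp: unslack_def PiE_iff extensional_def)
  ultimately show ?thesis ..
qed

lemma unslack_in_compositions:
  assumes t: "t \<in> cone_points g"
  shows "unslack t \<in> compositions g \<and> slack g (unslack t) = t"
proof -
  have tPi: "t \<in> Pi\<^sub>E {..<k} (\<lambda>_. {0..})" and integral: "\<And>j. j < k \<Longrightarrow> coord t j \<in> \<int>"
    and height: "height t = of_nat g"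
    using t unfolding cone_points_def by auto
  define y where "y = unslack t"
  have coord: "of_nat (y j) = coord t j" if "j < k" for j
    using that integral[OF that] coord_nonneg[OF that] tPi
    by (auto simp: y_def unslack_def of_nat_nat_floor PiE_iff)
  have ysum: "(\<Sum>i<k. y i) = g"
  proof -
    have "(of_nat (\<Sum>i<k. y i) :: rat) = (\<Sum>i<k. coord t i)"
      unfolding of_nat_sum using coord by simp
    then show ?thesis unfolding sum_coord height by (simp only: of_nat_eq_iff)
  qed
  have yle: "of_nat (y i) \<le> \<alpha> i * of_nat g" if "i < k" for i
  proof -
    have "of_int (t i) / of_int (n i) \<ge> (0 :: rat)" using PiE_mem[OF tPi] that n_pos[of i] by simp
    then show ?thesis unfolding coord[OF that] coord_def height by simp
  qed
  have "y i \<le> g" if "i < k" for i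
    unfolding ysum[symmetric] using that by (intro member_le_sum) auto
  moreover have "y \<in> extensional {..<k}" unfolding y_def unslack_def by simp
  ultimately have "y \<in> compositions g"
    unfolding compositions_def using ysum yle by (auto simp: PiE_iff)
  moreover have "slack g y = t"
  proof
    fix j show "slack g y j = t j"
      using slack_coord[OF height coord[symmetric]] PiE_arb[OF tPi, of j] by (simp add: slack_def)
  qed
  ultimately show ?thesis unfolding y_def ..
qed

lemma compositions_bij: "bij_betw (slack g) (compositions g) (cone_points g)"
  by (rule bij_betw_byWitness[where f' = unslack])
    (use slack_in_cone_points unslack_in_compositions in blast)+

(* Second bijection: every cone point t is uniquely a + A * c with a in \<A> and c a nonnegative
   integer vector, and then g = b(a) + sum_i c_i * d_i. The pairs (a, c) of total height g: *)
definition base_height :: "(nat \<Rightarrow> int) \<Rightarrow> nat" where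
  "base_height a = nat \<lfloor>height a\<rfloor>"

definition decompositions :: "nat \<Rightarrow> ((nat \<Rightarrow> int) \<times> (nat \<Rightarrow> nat)) set" where
  "decompositions g = (SIGMA a:setA k \<alpha>. if base_height a \<le> g
     then weighted_solutions {..<k} (\<lambda>i. nat (d i)) (g - base_height a) else {})"

definition split_point :: "(nat \<Rightarrow> int) \<Rightarrow> (nat \<Rightarrow> int) \<times> (nat \<Rightarrow> nat)" where
  "split_point t = (restrict (\<lambda>i. t i mod A) {..<k}, restrict (\<lambda>i. nat (t i div A)) {..<k})"

definition join_point :: "(nat \<Rightarrow> int) \<times> (nat \<Rightarrow> nat) \<Rightarrow> nat \<Rightarrow> int" where
  "join_point p = restrict (\<lambda>i. fst p i + A * int (snd p i)) {..<k}"

lemma height_setA: "a \<in> setA k \<alpha> \<Longrightarrow> height a = of_nat (base_height a)"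
  unfolding base_height_def setA_iff
  by (intro of_nat_nat_floor[symmetric] height_Ints height_nonneg) (auto simp: PiE_iff)

lemma height_join_point:
  "height (join_point (a, c)) = height a + of_nat (\<Sum>i<k. c i * nat (d i))"
proof -
  have "(\<Sum>i<k. int (c i) * d i) = int (\<Sum>i<k. c i * nat (d i))"
    unfolding of_nat_sum using d_pos by (intro sum.cong) (auto simp: less_imp_le)
  then have sum: "of_int (\<Sum>i<k. int (c i) * d i) = (of_nat (\<Sum>i<k. c i * nat (d i)) :: rat)"
    by (simp only: of_int_of_nat_eq)
  have "height (join_point (a, c)) = height (\<lambda>i. a i + A * int (c i))"
    by (rule height_cong) (simp add: join_point_def)
  also have "\<dots> = height a + of_int (\<Sum>i<k. int (c i) * d i)" by (rule height_shift)
  finally show ?thesis unfolding sum .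
qed

lemma coord_join_point_Ints:
  assumes j: "j < k"
  shows "coord (join_point (a, c)) j \<in> \<int> \<longleftrightarrow> coord a j \<in> \<int>"
proof -
  have "coord (join_point (a, c)) j = coord (\<lambda>i. a i + A * int (c i)) j"
    by (rule coord_cong) (simp_all add: join_point_def j)
  then show ?thesis using coord_shift_Ints[OF j] by simp
qed

lemma split_point_in_decompositions:
  assumes t: "t \<in> cone_points g"
  shows "split_point t \<in> decompositions g \<and> join_point (split_point t) = t"
proof -
  have tPi: "t \<in> Pi\<^sub>E {..<k} (\<lambda>_. {0..})" and integral: "\<And>j. j < k \<Longrightarrow> coord t j \<in> \<int>"
    and height: "height t = of_nat g"
    using t unfolding cone_points_def by auto
  obtain a c where ac: "split_point t = (a, c)" by fastforce
  have a: "a = restrict (\<lambda>i. t i mod A) {..<k}" and c: "c = restrict (\<lambda>i. nat (t i div A)) {..<k}"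
    using ac unfolding split_point_def by auto
  have join: "join_point (a, c) = t"
  proof
    fix i show "join_point (a, c) i = t i"
      using PiE_mem[OF tPi, of i] PiE_arb[OF tPi, of i] A_pos
      by (simp add: join_point_def a c pos_imp_zdiv_nonneg_iff)
  qed
  have "coord a j \<in> \<int>" if "j < k" for j
    using coord_join_point_Ints[OF that, of a c] integral[OF that] unfolding join by simp
  moreover have "a \<in> Pi\<^sub>E {..<k} (\<lambda>_. {0..<A})" unfolding a using A_pos by auto
  ultimately have "a \<in> setA k \<alpha>" unfolding setA_iff by blast
  define s where "s = (\<Sum>i<k. c i * nat (d i))"
  have s_eq: "base_height a + s = g"
    using height height_join_point[of a c] height_setA[OF \<open>a \<in> setA k \<alpha>\<close>]
    unfolding join s_def by (metis of_nat_add of_nat_eq_iff)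
  have "c i \<le> s" if "i < k" for i
  proof -
    have "c i \<le> c i * nat (d i)" using d_pos[OF that] by (simp add: Suc_le_eq)
    also have "\<dots> \<le> s" unfolding s_def using that by (intro member_le_sum) auto
    finally show ?thesis .
  qed
  moreover have "c \<in> extensional {..<k}" unfolding c by simp
  moreover have "s = g - base_height a" using s_eq by simp
  ultimately have "c \<in> weighted_solutions {..<k} (\<lambda>i. nat (d i)) (g - base_height a)"
    unfolding weighted_solutions_def PiE_iff s_def by auto
  then have "(a, c) \<in> decompositions g"
    unfolding decompositions_def using \<open>a \<in> setA k \<alpha>\<close> s_eq by auto
  then show ?thesis using ac join by simp
qed

lemma join_point_in_cone_points:
  assumes p: "p \<in> decompositions g"
  shows "join_point p \<in> cone_points g \<and> split_point (join_point p) = p"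
proof -
  obtain a c where p_eq: "p = (a, c)" by fastforce
  have a: "a \<in> setA k \<alpha>" and le: "base_height a \<le> g"
    and c: "c \<in> weighted_solutions {..<k} (\<lambda>i. nat (d i)) (g - base_height a)"
    using p unfolding p_eq decompositions_def by (auto split: if_splits)
  have aPi: "a \<in> Pi\<^sub>E {..<k} (\<lambda>_. {0..<A})" and integral: "\<And>j. j < k \<Longrightarrow> coord a j \<in> \<int>"
    using a unfolding setA_iff by auto
  have cPi: "c \<in> Pi\<^sub>E {..<k} (\<lambda>_. {..g - base_height a})"
    and s: "(\<Sum>i<k. c i * nat (d i)) = g - base_height a"
    using c unfolding weighted_solutions_def by auto
  have a_range: "0 \<le> a i \<and> a i < A" if "i < k" for i using PiE_mem[OF aPi, of i] that by simp
  have "height (join_point (a, c)) = of_nat g"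
    unfolding height_join_point height_setA[OF a] s using le by simp
  moreover have "join_point (a, c) \<in> Pi\<^sub>E {..<k} (\<lambda>_. {0..})"
    using a_range A_pos by (simp add: join_point_def)
  moreover have "coord (join_point (a, c)) j \<in> \<int>" if "j < k" for j
    using coord_join_point_Ints[OF that] integral[OF that] by simp
  ultimately have "join_point (a, c) \<in> cone_points g"
    unfolding cone_points_def by blast
  moreover have "split_point (join_point (a, c)) = (a, c)"
  proof -
    have div_mod: "(a i + A * int (c i)) div A = int (c i)" "(a i + A * int (c i)) mod A = a i"
      if "i < k" for i
      using a_range[OF that] by simp_all
    have "restrict (\<lambda>i. join_point (a, c) i mod A) {..<k} = a"
    proof
      fix i show "restrict (\<lambda>i. join_point (a, c) i mod A) {..<k} i = a i"
        using div_mod PiE_arb[OF aPi, of i] by (simp add: join_point_def)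
    qed
    moreover have "restrict (\<lambda>i. nat (join_point (a, c) i div A)) {..<k} = c"
    proof
      fix i show "restrict (\<lambda>i. nat (join_point (a, c) i div A)) {..<k} i = c i"
        using div_mod PiE_arb[OF cPi, of i] by (simp add: join_point_def)
    qed
    ultimately show ?thesis unfolding split_point_def by simp
  qed
  ultimately show ?thesis unfolding p_eq ..
qed

lemma cone_points_bij: "bij_betw split_point (cone_points g) (decompositions g)"
  by (rule bij_betw_byWitness[where f' = join_point])
    (use split_point_in_decompositions join_point_in_cone_points in blast)+

lemma finite_setA: "finite (setA k \<alpha>)"
proof (rule finite_subset)
  show "setA k \<alpha> \<subseteq> Pi\<^sub>E {..<k} (\<lambda>_. {0..<A})" using setA_iff by blast
qed (intro finite_PiE; simp)

(* Coefficientwise, (sum_{a in \<A>} X^b(a)) * prod_i 1/(1 - X^d_i) counts the pairs (a, c) of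
   height g, and these are in bijection with the compositions of g. *)
lemma generating_function_nth:
  "((\<Sum>a\<in>setA k \<alpha>. fps_X ^ base_height a) * (\<Prod>i<k. geometric_fps (nat (d i)))) $ g
     = (of_nat (fcount k \<alpha> g) :: rat)"
proof -
  have weights: "\<forall>i\<in>{..<k}. nat (d i) > 0" using d_pos by simp
  have "((\<Sum>a\<in>setA k \<alpha>. fps_X ^ base_height a) * (\<Prod>i<k. geometric_fps (nat (d i)))) $ g
      = (\<Sum>a\<in>setA k \<alpha>. (fps_X ^ base_height a * (\<Prod>i<k. geometric_fps (nat (d i)))) $ g)"
    unfolding sum_distrib_right fps_sum_nth ..
  also have "\<dots> = (\<Sum>a\<in>setA k \<alpha>. of_nat (card (if base_height a \<le> g
      then weighted_solutions {..<k} (\<lambda>i. nat (d i)) (g - base_height a) else {})))"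
    using prod_geometric_fps_nth[OF finite_lessThan weights]
    by (intro sum.cong) (auto simp: fps_X_power_mult_nth)
  also have "\<dots> = of_nat (card (decompositions g))"
    unfolding decompositions_def of_nat_sum[symmetric]
    by (subst card_SigmaI) (auto simp: finite_setA finite_weighted_solutions)
  also have "card (decompositions g) = card (compositions g)"
    using bij_betw_same_card[OF compositions_bij] bij_betw_same_card[OF cone_points_bij] by simp
  finally show ?thesis unfolding fcount_def compositions_def .
qed

end

theorem mainTheorem8:
  fixes k :: nat and \<alpha> :: "nat \<Rightarrow> rat"
  assumes "k \<ge> 2"
    and "\<forall>i<k. \<alpha> i \<ge> 0"
    and "\<forall>j<k. (\<Sum>i\<in>{..<k} - {j}. \<alpha> i) \<le> 1"
    and "(\<Sum>i<k. \<alpha> i) > 1"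
  shows "(Abs_fps (\<lambda>g. of_nat (fcount k \<alpha> g)) :: rat fps)
    = (\<Sum>a\<in>setA k \<alpha>. fps_X ^ nat \<lfloor>bval k \<alpha> a\<rfloor>)
      / (\<Prod>i<k. 1 - fps_X ^ nat (bigN k \<alpha> div den (\<alpha> i)))"
proof -
  interpret weight_cone k \<alpha> using assms by unfold_locales auto
  define F where "F = (Abs_fps (\<lambda>g. of_nat (fcount k \<alpha> g)) :: rat fps)"
  define P where "P = (\<Sum>a\<in>setA k \<alpha>. fps_X ^ base_height a :: rat fps)"
  define Q where "Q = (\<Prod>i<k. 1 - fps_X ^ nat (d i) :: rat fps)"
  define G where "G = (\<Prod>i<k. geometric_fps (nat (d i)) :: rat fps)"
  have inverse: "Q * G = 1"
    unfolding Q_def G_def prod.distrib[symmetric]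
    by (intro prod.neutral ballI geometric_fps_inverse) (simp add: d_pos)
  moreover have "F = P * G"
    by (rule fps_ext) (simp add: F_def P_def G_def generating_function_nth)
  then have "F * Q = P" using inverse by (simp add: algebra_simps)
  moreover have "Q \<noteq> 0" using inverse by auto
  ultimately have "P / Q = F" using fps_divide_times_eq[of Q F] by simp
  then show ?thesis
    unfolding F_def P_def Q_def base_height_def bval_eq_height d_def n_def by simp
qed

end
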